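(* For every integer $L\geq 0$, \[ \sum_{j=-\infty}^{\infty} \left(\frac{j}{3}\right) q^{\binom{j-1}{2}} {2L \brack L+j}_q =\begin{cases} \dfrac{(-1;q^3)_{L-1}}{(-1;q)_{L-1}}\, q^{L-1}\,\dfrac{1-q^3}{1-q}\,(1-q^L), & L>0,\\[2mm] 0, & L=0,\end{cases} \] where $\binom{j-1}{2}=\frac{(j-1)(j-2)}{2}$.
   Context: For a variable $a$ and integer $n\ge 0$, $(a;q)_n=(1-a)(1-aq)\cdots(1-aq^{n-1})$ (with $(a;q)_0=1$). The $q$-binomial coefficient is ${A \brack B}_q=\frac{(q;q)_A}{(q;q)_B(q;q)_{A-B}}$ if $0\le B\le A$ are integers, and $0$ otherwise. $\left(\frac{j}{3}\right)$ is the Legendre symbol modulo 3: it equals $1$ if $j\equiv 1 \pmod 3$, $-1$ if $j\equiv -1\pmod 3$, and $0$ if $3\mid j$. *)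

theory Defs
  imports Complex_Main "HOL-Number_Theory.Number_Theory"
begin

definition qpoch :: "complex \<Rightarrow> complex \<Rightarrow> nat \<Rightarrow> complex" where
  "qpoch a q n = (\<Prod>i<n. (1 - a * q ^ i))"

definition qbinom :: "complex \<Rightarrow> int \<Rightarrow> int \<Rightarrow> complex" where
  "qbinom q A B = (if 0 \<le> B \<and> B \<le> A
     then qpoch q q (nat A) / (qpoch q q (nat B) * qpoch q q (nat (A - B)))
     else 0)"

end

(* Write k = j + L.  Since binom(j-1,2) is the triangular number of k - L - 2, the finite
   Jacobi triple product with a = L - 2 and b = L + 2 identifies
     F(z) = sum_k z^k q^T(k-L-2) [2L, k]  with  prod_{i<L-2} (1 + z q^(i+1)) prod_{i<L+2} (z + q^i).
   For a primitive cube root of unity w, the Legendre symbol mod 3 is a difference of characters: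
   (w - w^2) (j/3) = w^(k+2L) - (w^2)^(k+2L), so (w - w^2) times the sum is
   w^(2L) F(w) - (w^2)^(2L) F(w^2).  At a root z of z^2 + z + 1 the factors of F pair up as
   (1 + z x)(z + x) = z (1 - x + x^2), which produces (-1;q^3)_(L-1) / (-1;q)_(L-1); what remains
   is a cubic in z whose values at w and w^2 differ by (w - w^2) q^(L-1) (1 + q + q^2) (1 - q^L).
   The case L = 1, where a = L - 2 would be negative, is checked by hand. *)

theory Submission
  imports Defs
begin

lemma qpoch_Suc: "qpoch a q (Suc n) = qpoch a q n * (1 - a * q ^ n)"
  by (simp add: qpoch_def)

lemma qpoch_eq_0_iff: "qpoch a q n = 0 \<longleftrightarrow> (\<exists>i<n. a * q ^ i = 1)"
  by (auto simp: qpoch_def)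

lemma qpoch_nonzero_le: "qpoch a q n \<noteq> 0 \<Longrightarrow> m \<le> n \<Longrightarrow> qpoch a q m \<noteq> 0"
  by (auto simp: qpoch_eq_0_iff)

lemma qpoch_cube:
  "qpoch (- (a ^ 3)) (q ^ 3) n = qpoch (- a) q n * (\<Prod>i<n. 1 - a * q ^ i + (a * q ^ i)\<^sup>2)"
proof -
  have "1 + a ^ 3 * (q ^ 3) ^ i = (1 + a * q ^ i) * (1 - a * q ^ i + (a * q ^ i)\<^sup>2)" for i
    by (simp add: algebra_simps power2_eq_square power3_eq_cube flip: power_mult_distrib power_mult)
  then show ?thesis
    by (simp add: qpoch_def prod.distrib)
qed

lemma qbinom_nat:
  "k \<le> N \<Longrightarrow> qbinom q (int N) (int k) = qpoch q q N / (qpoch q q k * qpoch q q (N - k))"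
  by (simp add: qbinom_def of_nat_diff[symmetric] del: of_nat_diff)

lemma qbinom_eq_0: "A < B \<Longrightarrow> qbinom q A B = 0"
  by (simp add: qbinom_def)

lemma qbinom_0: "qpoch q q N \<noteq> 0 \<Longrightarrow> qbinom q (int N) 0 = 1"
  using qbinom_nat[of 0 N q] by (simp add: qpoch_def)

lemma qbinom_diag: "qpoch q q N \<noteq> 0 \<Longrightarrow> qbinom q (int N) (int N) = 1"
  by (simp add: qbinom_nat qpoch_def)

(* Over this common denominator both Pascal rules reduce to splittings of 1 - q^(N+1). *)
lemma qbinom_common_denom:
  assumes "qpoch q q (Suc N) \<noteq> 0" and "k \<le> N"
  defines "D \<equiv> qpoch q q (Suc k) * qpoch q q (N - k)"
  shows "qbinom q (int (Suc N)) (int (Suc k)) = qpoch q q N * (1 - q ^ Suc N) / D"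
    and "qbinom q (int N) (int (Suc k)) = qpoch q q N * (1 - q ^ (N - k)) / D"
    and "qbinom q (int N) (int k) = qpoch q q N * (1 - q ^ Suc k) / D"
proof -
  have nz: "q ^ Suc i \<noteq> 1" if "i \<le> N" for i
    using assms(1) that unfolding qpoch_eq_0_iff by (metis less_Suc_eq_le power_Suc)
  show "qbinom q (int (Suc N)) (int (Suc k)) = qpoch q q N * (1 - q ^ Suc N) / D"
    using qbinom_nat[of "Suc k" "Suc N" q] assms(2) by (simp add: D_def qpoch_Suc)
  show "qbinom q (int N) (int k) = qpoch q q N * (1 - q ^ Suc k) / D"
    using qbinom_nat[of k N q] nz[OF assms(2)] assms(2) by (simp add: D_def qpoch_Suc)
  show "qbinom q (int N) (int (Suc k)) = qpoch q q N * (1 - q ^ (N - k)) / D"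
  proof (cases "k = N")
    case True
    then show ?thesis
      by (simp add: qbinom_eq_0)
  next
    case False
    then obtain d where d: "N - k = Suc d"
      using assms(2) by (metis Suc_diff_Suc le_neq_implies_less)
    have "q ^ Suc d \<noteq> 1"
      using nz[of d] d by simp
    moreover have "N - Suc k = d"
      using d by simp
    ultimately show ?thesis
      using qbinom_nat[of "Suc k" N q] False assms(2) d by (simp add: D_def qpoch_Suc add.commute)
  qed
qed

lemma qbinom_Suc_Suc:
  assumes "qpoch q q (Suc N) \<noteq> 0"
  shows "qbinom q (int (Suc N)) (int (Suc k))
    = qbinom q (int N) (int (Suc k)) + q ^ (N - k) * qbinom q (int N) (int k)"
proof (cases "k \<le> N")
  case True
  have "1 - q ^ Suc N = (1 - q ^ (N - k)) + q ^ (N - k) * (1 - q ^ Suc k)"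
    using True by (simp add: algebra_simps flip: power_add)
  then show ?thesis
    unfolding qbinom_common_denom[OF assms True]
    by (simp only: distrib_left add_divide_distrib times_divide_eq_right mult.left_commute)
qed (simp add: qbinom_eq_0)

lemma qbinom_Suc_Suc':
  assumes "qpoch q q (Suc N) \<noteq> 0"
  shows "qbinom q (int (Suc N)) (int (Suc k))
    = q ^ Suc k * qbinom q (int N) (int (Suc k)) + qbinom q (int N) (int k)"
proof (cases "k \<le> N")
  case True
  have "1 - q ^ Suc N = q ^ Suc k * (1 - q ^ (N - k)) + (1 - q ^ Suc k)"
    using True by (simp add: algebra_simps flip: power_add)
  then show ?thesis
    unfolding qbinom_common_denom[OF assms True]
    by (simp only: distrib_left add_divide_distrib times_divide_eq_right mult.left_commute)
qed (simp add: qbinom_eq_0)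

(* triangular m = binom(m+1, 2) for every integer m; binom(j-1, 2) is triangular (j - 2). *)
definition triangular :: "int \<Rightarrow> nat" where
  "triangular m = nat (m * (m + 1) div 2)"

lemma triangular_succ: "int (triangular (m + 1)) = int (triangular m) + m + 1"
proof -
  have nonneg: "0 \<le> x * (x + 1)" for x :: int
    by (simp add: zero_le_mult_iff) linarith
  have "(m + 1) * (m + 1 + 1) = m * (m + 1) + 2 * (m + 1)"
    by (simp add: algebra_simps)
  then show ?thesis
    using nonneg[of m] nonneg[of "m + 1"] by (simp add: triangular_def)
qed

lemma power_triangular_shift:
  fixes q :: "'a :: monoid_mult"
  assumes "m' = m + 1" and "int k = m' + int b"
  shows "q ^ triangular m * q ^ k = q ^ b * q ^ triangular m'"
proof -
  have "triangular m + k = b + triangular m'"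
    using triangular_succ[of m] assms(2) unfolding assms(1) by linarith
  then show ?thesis
    by (metis power_add)
qed

lemma q_binomial_theorem:
  assumes "qpoch q q a \<noteq> 0"
  shows "(\<Prod>i<a. 1 + z * q ^ Suc i) = (\<Sum>k\<le>a. z ^ k * q ^ triangular k * qbinom q (int a) (int k))"
  using assms
proof (induction a)
  case 0
  then show ?case by (simp add: triangular_def qbinom_def qpoch_def)
next
  case (Suc a)
  have nz: "qpoch q q a \<noteq> 0"
    using Suc.prems qpoch_nonzero_le le_SucI by blast
  let ?f = "\<lambda>k. z ^ k * q ^ triangular k * qbinom q (int a) (int k)"
  have step: "z ^ Suc k * q ^ triangular (int (Suc k)) * qbinom q (int (Suc a)) (int (Suc k))
      = ?f (Suc k) + z * q ^ Suc a * ?f k" if "k \<le> a" for k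
  proof -
    have "q ^ triangular (int k) * q ^ Suc a = q ^ (a - k) * q ^ triangular (int (Suc k))"
      using that by (intro power_triangular_shift) auto
    then show ?thesis
      unfolding qbinom_Suc_Suc[OF Suc.prems] by (simp add: algebra_simps)
  qed
  have "(\<Sum>k\<le>Suc a. z ^ k * q ^ triangular k * qbinom q (int (Suc a)) (int k))
      = 1 + (\<Sum>k\<le>a. z ^ Suc k * q ^ triangular (int (Suc k))
                * qbinom q (int (Suc a)) (int (Suc k)))"
    using qbinom_0[OF Suc.prems] by (simp only: sum.atMost_Suc_shift) (simp add: triangular_def)
  also have "\<dots> = 1 + (\<Sum>k\<le>a. ?f (Suc k) + z * q ^ Suc a * ?f k)"
    by (rule arg_cong[of _ _ "(+) 1"], rule sum.cong[OF refl step]) simp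
  also have "\<dots> = (1 + (\<Sum>k\<le>a. ?f (Suc k))) + z * q ^ Suc a * (\<Sum>k\<le>a. ?f k)"
    by (simp only: sum.distrib sum_distrib_left add.assoc)
  also have "1 + (\<Sum>k\<le>a. ?f (Suc k)) = (\<Sum>k\<le>Suc a. ?f k)"
    using qbinom_0[OF nz] by (simp only: sum.atMost_Suc_shift) (simp add: triangular_def)
  also have "\<dots> = (\<Sum>k\<le>a. ?f k)"
    by (simp add: qbinom_eq_0)
  finally show ?case
    using Suc.IH[OF nz] by (simp add: algebra_simps)
qed

lemma finite_triple_product:
  assumes "qpoch q q (a + b) \<noteq> 0"
  shows "(\<Prod>i<a. 1 + z * q ^ Suc i) * (\<Prod>i<b. z + q ^ i)
    = (\<Sum>k\<le>a + b. z ^ k * q ^ triangular (int k - int b) * qbinom q (int (a + b)) (int k))"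
  using assms
proof (induction b)
  case 0
  then show ?case using q_binomial_theorem[of q a z] by simp
next
  case (Suc b)
  define N where "N = a + b"
  have nzS: "qpoch q q (Suc N) \<noteq> 0" and nz: "qpoch q q N \<noteq> 0"
    using Suc.prems qpoch_nonzero_le by (auto simp: N_def)
  let ?g = "\<lambda>k. z ^ k * q ^ triangular (int k - int b) * qbinom q (int N) (int k)"
  have step: "z ^ Suc k * q ^ triangular (int (Suc k) - int (Suc b))
        * qbinom q (int (Suc N)) (int (Suc k))
      = q ^ b * ?g (Suc k) + z * ?g k" for k
  proof -
    have "q ^ triangular (int k - int b) * q ^ Suc k = q ^ b * q ^ triangular (int (Suc k) - int b)"
      by (intro power_triangular_shift) auto
    then show ?thesis
      unfolding qbinom_Suc_Suc'[OF nzS] by (simp add: algebra_simps)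
  qed
  have first: "q ^ triangular (- 1 - int b) = q ^ b * q ^ triangular (- int b)"
    using power_triangular_shift[of "- int b" "- 1 - int b" 0 b q] by simp
  have "(\<Sum>k\<le>Suc N. z ^ k * q ^ triangular (int k - int (Suc b)) * qbinom q (int (Suc N)) (int k))
      = q ^ triangular (- 1 - int b)
        + (\<Sum>k\<le>N. z ^ Suc k * q ^ triangular (int (Suc k) - int (Suc b))
                * qbinom q (int (Suc N)) (int (Suc k)))"
    using qbinom_0[OF nzS] by (simp only: sum.atMost_Suc_shift) (simp add: algebra_simps)
  also have "\<dots> = q ^ b * ?g 0 + (\<Sum>k\<le>N. q ^ b * ?g (Suc k) + z * ?g k)"
    unfolding step first using qbinom_0[OF nz] by simp
  also have "\<dots> = q ^ b * (\<Sum>k\<le>Suc N. ?g k) + z * (\<Sum>k\<le>N. ?g k)"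
    by (simp only: sum.atMost_Suc_shift sum.distrib sum_distrib_left distrib_left add.assoc)
  also have "\<dots> = (z + q ^ b) * (\<Sum>k\<le>N. ?g k)"
    by (simp add: qbinom_eq_0 algebra_simps)
  finally show ?case
    using Suc.IH[OF nz[unfolded N_def]] by (simp add: N_def algebra_simps)
qed

lemma Legendre_cong:
  assumes "[a = b] (mod p)"
  shows "Legendre a p = Legendre b p"
proof -
  have "[a = 0] (mod p) \<longleftrightarrow> [b = 0] (mod p)" and "QuadRes p a \<longleftrightarrow> QuadRes p b"
    using assms unfolding QuadRes_def by (meson cong_sym cong_trans)+
  then show ?thesis
    by (simp add: Legendre_def)
qed

lemma Legendre_mod_3: "Legendre m 3 = (if m mod 3 = 1 then 1 else if m mod 3 = 2 then -1 else 0)"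
proof -
  have "[Legendre m 3 = m] (mod 3)"
    using euler_criterion[of 3 m] by simp
  moreover have "Legendre m 3 \<in> {-1, 0, 1}"
    by (simp add: Legendre_def)
  ultimately show ?thesis
    by (auto simp: cong_def)
qed

context
  fixes \<omega> :: "'a :: comm_ring_1"
  assumes root: "\<omega>\<^sup>2 + \<omega> + 1 = 0"
begin

lemma cube_root_cube: "\<omega> ^ 3 = 1"
proof -
  have "\<omega> ^ 3 - 1 = (\<omega>\<^sup>2 + \<omega> + 1) * (\<omega> - 1)"
    by (simp add: ring_distribs power2_eq_square power3_eq_cube)
  then show ?thesis
    unfolding root by simp
qed

lemma cube_root_power_mod: "\<omega> ^ n = \<omega> ^ (n mod 3)"
proof -
  have "\<omega> ^ n = \<omega> ^ (3 * (n div 3) + n mod 3)"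
    by simp
  also have "\<dots> = (\<omega> ^ 3) ^ (n div 3) * \<omega> ^ (n mod 3)"
    by (simp only: power_add power_mult)
  finally show ?thesis
    by (simp add: cube_root_cube)
qed

lemma cube_root_square_square: "(\<omega>\<^sup>2)\<^sup>2 = \<omega>"
proof -
  have "(\<omega>\<^sup>2)\<^sup>2 = \<omega> ^ 3 * \<omega>"
    by (simp flip: power_mult power_Suc2)
  then show ?thesis
    by (simp add: cube_root_cube)
qed

lemma cube_root_square_root: "(\<omega>\<^sup>2)\<^sup>2 + \<omega>\<^sup>2 + 1 = 0"
  unfolding cube_root_square_square using root by (simp add: add.commute)

lemma cubic_difference:
  "(\<omega>\<^sup>2 + a) * (\<omega>\<^sup>2 + b) * (\<omega>\<^sup>2 + c) - (\<omega> + a) * (\<omega> + b) * (\<omega> + c)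
    = (\<omega> - \<omega>\<^sup>2) * ((a + b + c) - (a * b + a * c + b * c))"
proof -
  have "(\<omega>\<^sup>2 + a) * (\<omega>\<^sup>2 + b) * (\<omega>\<^sup>2 + c) - (\<omega> + a) * (\<omega> + b) * (\<omega> + c)
      - (\<omega> - \<omega>\<^sup>2) * ((a + b + c) - (a * b + a * c + b * c))
    = (\<omega>\<^sup>2 + \<omega> + 1) * (\<omega> - 1) * (\<omega> ^ 3 + \<omega> * (a + b + c))"
    by (simp add: algebra_simps power2_eq_square power3_eq_cube)
  then show ?thesis
    unfolding root by simp
qed

lemma cube_root_prod_pairs:
  "(\<Prod>i\<in>A. 1 + \<omega> * x i) * (\<Prod>i\<in>A. \<omega> + x i) = \<omega> ^ card A * (\<Prod>i\<in>A. 1 - x i + (x i)\<^sup>2)"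
proof -
  have "(1 + \<omega> * y) * (\<omega> + y) - \<omega> * (1 - y + y\<^sup>2) = y * (\<omega>\<^sup>2 + \<omega> + 1)" for y
    by (simp add: algebra_simps power2_eq_square)
  then have "(1 + \<omega> * y) * (\<omega> + y) = \<omega> * (1 - y + y\<^sup>2)" for y
    unfolding root by simp
  then show ?thesis
    by (simp add: prod.distrib[symmetric] prod.distrib)
qed

lemma triple_product_at_cube_root:
  fixes q :: 'a
  shows "\<omega> ^ (2 * n + 4) * ((\<Prod>i<n. 1 + \<omega> * q ^ Suc i) * (\<Prod>i<n + 4. \<omega> + q ^ i))
    = - ((\<Prod>i<Suc n. 1 - q ^ i + (q ^ i)\<^sup>2)
          * ((\<omega> + q ^ (n + 1)) * (\<omega> + q ^ (n + 2)) * (\<omega> + q ^ (n + 3))))"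
proof -
  let ?X = "(\<omega> + q ^ (n + 1)) * (\<omega> + q ^ (n + 2)) * (\<omega> + q ^ (n + 3))"
  let ?P = "\<Prod>i<n. 1 - q ^ Suc i + (q ^ Suc i)\<^sup>2"
  have unit: "\<omega> ^ (2 * n + 4) * \<omega> ^ n * (\<omega> + 1) = -1"
  proof -
    have "2 * n + 4 + n = 3 * Suc n + 1"
      by simp
    then have "\<omega> ^ (2 * n + 4) * \<omega> ^ n = (\<omega> ^ 3) ^ Suc n * \<omega>"
      by (metis power_add power_mult power_one_right)
    then have "\<omega> ^ (2 * n + 4) * \<omega> ^ n * (\<omega> + 1) = \<omega>\<^sup>2 + \<omega>"
      by (simp add: cube_root_cube power2_eq_square algebra_simps)
    then show ?thesis
      using root by (simp add: add_eq_0_iff2)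
  qed
  have split: "(\<Prod>i<n + 4. \<omega> + q ^ i) = (\<omega> + 1) * (\<Prod>i<n. \<omega> + q ^ Suc i) * ?X"
  proof -
    have "n + 4 = Suc (Suc (Suc (Suc n)))"
      by simp
    then have "(\<Prod>i<n + 4. \<omega> + q ^ i)
        = (\<Prod>i<Suc n. \<omega> + q ^ i)
          * (\<omega> + q ^ Suc n) * (\<omega> + q ^ Suc (Suc n)) * (\<omega> + q ^ Suc (Suc (Suc n)))"
      by (simp only: prod.lessThan_Suc)
    also have "(\<Prod>i<Suc n. \<omega> + q ^ i) = (\<omega> + 1) * (\<Prod>i<n. \<omega> + q ^ Suc i)"
      by (simp only: prod.lessThan_Suc_shift) simp
    finally show ?thesis
      by (simp add: mult_ac numeral_3_eq_3)
  qed
  have paired: "(\<Prod>i<n. 1 + \<omega> * q ^ Suc i) * (\<Prod>i<n. \<omega> + q ^ Suc i) = \<omega> ^ n * ?P"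
    using cube_root_prod_pairs[of "\<lambda>i. q ^ Suc i" "{..<n}"] by simp
  have shift: "(\<Prod>i<Suc n. 1 - q ^ i + (q ^ i)\<^sup>2) = ?P"
    by (simp only: prod.lessThan_Suc_shift) simp
  have "\<omega> ^ (2 * n + 4) * ((\<Prod>i<n. 1 + \<omega> * q ^ Suc i) * (\<Prod>i<n + 4. \<omega> + q ^ i))
      = \<omega> ^ (2 * n + 4) * ((\<Prod>i<n. 1 + \<omega> * q ^ Suc i) * (\<Prod>i<n. \<omega> + q ^ Suc i))
        * (\<omega> + 1) * ?X"
    unfolding split by (simp only: mult_ac)
  also have "\<dots> = (\<omega> ^ (2 * n + 4) * \<omega> ^ n * (\<omega> + 1)) * ?P * ?X"
    unfolding paired by (simp only: mult_ac)
  finally show ?thesis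
    unfolding unit shift by simp
qed

end

lemma cube_root_ne_square:
  fixes \<omega> :: "'a :: field_char_0"
  assumes "\<omega>\<^sup>2 + \<omega> + 1 = 0"
  shows "\<omega> \<noteq> \<omega>\<^sup>2"
proof
  assume "\<omega> = \<omega>\<^sup>2"
  then have "\<omega> = 0 \<or> \<omega> = 1"
    by (metis power2_eq_square mult_cancel_left1)
  then show False
    using assms by auto
qed

lemma Legendre_3_cube_root:
  fixes \<omega> :: "'a :: comm_ring_1"
  assumes "\<omega>\<^sup>2 + \<omega> + 1 = 0"
  shows "(\<omega> - \<omega>\<^sup>2) * of_int (Legendre (int n) 3) = \<omega> ^ n - (\<omega>\<^sup>2) ^ n"
proof -
  have "\<omega> ^ n - (\<omega>\<^sup>2) ^ n = \<omega> ^ (n mod 3) - (\<omega>\<^sup>2) ^ (n mod 3)"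
    using cube_root_power_mod[OF assms] cube_root_power_mod[OF cube_root_square_root[OF assms]]
    by metis
  moreover have "int n mod 3 = int (n mod 3)"
    by (simp add: zmod_int)
  moreover have "n mod 3 = 0 \<or> n mod 3 = 1 \<or> n mod 3 = 2"
    by presburger
  ultimately show ?thesis
    using cube_root_square_square[OF assms]
    by (elim disjE) (simp_all add: Legendre_mod_3)
qed

lemma sum_symmetric_interval_shift:
  "(\<Sum>j\<in>{-int L..int L}. f j) = (\<Sum>k\<le>2 * L. f (int k - int L))"
  by (rule sum.reindex_bij_witness[of _ "\<lambda>k. int k - int L" "\<lambda>j. nat (j + int L)"]) auto

lemma Legendre_qbinom_sum_reindex:
  "(\<Sum>j\<in>{-int L..int L}. of_int (Legendre j 3) * q ^ nat ((j - 1) * (j - 2) div 2)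
      * qbinom q (2 * int L) (int L + j))
    = (\<Sum>k\<le>2 * L. of_int (Legendre (int (k + 2 * L)) 3)
      * (q ^ triangular (int k - int (L + 2)) * qbinom q (int (2 * L)) (int k)))"
  unfolding sum_symmetric_interval_shift
proof (rule sum.cong[OF refl])
  fix k
  have "Legendre (int k - int L) 3 = Legendre (int (k + 2 * L)) 3"
    by (rule Legendre_cong) (simp add: cong_iff_dvd_diff)
  moreover have "nat ((int k - int L - 1) * (int k - int L - 2) div 2) = triangular (int k - int (L + 2))"
    unfolding triangular_def by (simp add: algebra_simps)
  ultimately show "of_int (Legendre (int k - int L) 3)
      * q ^ nat ((int k - int L - 1) * (int k - int L - 2) div 2)
      * qbinom q (2 * int L) (int L + (int k - int L))
    = of_int (Legendre (int (k + 2 * L)) 3)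
      * (q ^ triangular (int k - int (L + 2)) * qbinom q (int (2 * L)) (int k))"
    by simp
qed

lemma qbinom_generating_function_at_cube_root:
  fixes q z :: complex
  assumes "qpoch q q (2 * L) \<noteq> 0" and L: "L = n + 2" and root: "z\<^sup>2 + z + 1 = 0"
  shows "z ^ (2 * L) * (\<Sum>k\<le>2 * L. z ^ k
        * (q ^ triangular (int k - int (L + 2)) * qbinom q (int (2 * L)) (int k)))
    = - ((\<Prod>i<Suc n. 1 - q ^ i + (q ^ i)\<^sup>2)
          * ((z + q ^ (n + 1)) * (z + q ^ (n + 2)) * (z + q ^ (n + 3))))"
proof -
  have shifts: "L + 2 = n + 4" "2 * L = n + (n + 4)"
    using L by simp_all
  have "(\<Sum>k\<le>2 * L. z ^ k * (q ^ triangular (int k - int (L + 2)) * qbinom q (int (2 * L)) (int k)))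
      = (\<Prod>i<n. 1 + z * q ^ Suc i) * (\<Prod>i<n + 4. z + q ^ i)"
    unfolding shifts finite_triple_product[OF assms(1)[unfolded shifts]] by (simp only: mult.assoc)
  moreover have "2 * L = 2 * n + 4"
    using L by simp
  ultimately show ?thesis
    using triple_product_at_cube_root[OF root, of n q] by (simp only:)
qed

lemma Legendre_qbinom_sum_ge_2:
  fixes q :: complex
  assumes nz: "qpoch q q (2 * L) \<noteq> 0" and L: "L = n + 2"
  shows "(\<Sum>j\<in>{-int L..int L}. of_int (Legendre j 3) * q ^ nat ((j - 1) * (j - 2) div 2)
            * qbinom q (2 * int L) (int L + j))
    = (\<Prod>i<Suc n. 1 - q ^ i + (q ^ i)\<^sup>2) * (q ^ (n + 1) * (1 + q + q\<^sup>2) * (1 - q ^ (n + 2)))"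
    (is "?S = _")
proof -
  define E where "E k = q ^ triangular (int k - int (L + 2)) * qbinom q (int (2 * L)) (int k)" for k
  define C where "C = (\<Prod>i<Suc n. 1 - q ^ i + (q ^ i)\<^sup>2)"
  define X where "X z = (z + q ^ (n + 1)) * (z + q ^ (n + 2)) * (z + q ^ (n + 3))" for z
  define \<omega> where "\<omega> = Complex (- 1 / 2) (sqrt 3 / 2)"
  have root: "\<omega>\<^sup>2 + \<omega> + 1 = 0"
    by (simp add: \<omega>_def complex_eq_iff power2_eq_square field_simps)
  have at_root: "z ^ (2 * L) * (\<Sum>k\<le>2 * L. z ^ k * E k) = - (C * X z)" if "z\<^sup>2 + z + 1 = 0" for z
    unfolding E_def C_def X_def by (rule qbinom_generating_function_at_cube_root[OF nz L that])
  have "(\<omega> - \<omega>\<^sup>2) * ?S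
      = (\<Sum>k\<le>2 * L. ((\<omega> - \<omega>\<^sup>2) * of_int (Legendre (int (k + 2 * L)) 3)) * E k)"
    unfolding Legendre_qbinom_sum_reindex E_def sum_distrib_left by (simp only: mult.assoc)
  also have "\<dots>
      = (\<Sum>k\<le>2 * L. (\<omega> ^ k * \<omega> ^ (2 * L) - (\<omega>\<^sup>2) ^ k * (\<omega>\<^sup>2) ^ (2 * L)) * E k)"
    unfolding Legendre_3_cube_root[OF root] power_add ..
  also have "\<dots> = \<omega> ^ (2 * L) * (\<Sum>k\<le>2 * L. \<omega> ^ k * E k)
      - (\<omega>\<^sup>2) ^ (2 * L) * (\<Sum>k\<le>2 * L. (\<omega>\<^sup>2) ^ k * E k)"
    by (simp add: sum_subtractf sum_distrib_left algebra_simps)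
  also have "\<dots> = C * (X (\<omega>\<^sup>2) - X \<omega>)"
    unfolding at_root[OF root] at_root[OF cube_root_square_root[OF root]] by (simp add: algebra_simps)
  also have "X (\<omega>\<^sup>2) - X \<omega> = (\<omega> - \<omega>\<^sup>2) * ((q ^ (n + 1) + q ^ (n + 2) + q ^ (n + 3))
      - (q ^ (n + 1) * q ^ (n + 2) + q ^ (n + 1) * q ^ (n + 3) + q ^ (n + 2) * q ^ (n + 3)))"
    unfolding X_def by (rule cubic_difference[OF root])
  finally have "?S = C * ((q ^ (n + 1) + q ^ (n + 2) + q ^ (n + 3))
      - (q ^ (n + 1) * q ^ (n + 2) + q ^ (n + 1) * q ^ (n + 3) + q ^ (n + 2) * q ^ (n + 3)))"
    using cube_root_ne_square[OF root] by simp
  also have "(q ^ (n + 1) + q ^ (n + 2) + q ^ (n + 3))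
      - (q ^ (n + 1) * q ^ (n + 2) + q ^ (n + 1) * q ^ (n + 3) + q ^ (n + 2) * q ^ (n + 3))
    = q ^ (n + 1) * (1 + q + q\<^sup>2) * (1 - q ^ (n + 2))"
    by (simp add: algebra_simps power2_eq_square power3_eq_cube power_add)
  finally show ?thesis
    unfolding C_def .
qed

lemma Legendre_qbinom_sum:
  fixes q :: complex
  assumes nz: "qpoch q q (2 * L) \<noteq> 0" and "0 < L"
  shows "(\<Sum>j\<in>{-int L..int L}. of_int (Legendre j 3) * q ^ nat ((j - 1) * (j - 2) div 2)
            * qbinom q (2 * int L) (int L + j))
    = (\<Prod>i<L - 1. 1 - q ^ i + (q ^ i)\<^sup>2) * (q ^ (L - 1) * (1 + q + q\<^sup>2) * (1 - q ^ L))"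
proof (cases "L = 1")
  case True
  have "{- 1..1 :: int} = {- 1, 0, 1}"
    by auto
  moreover have "qbinom q 2 0 = 1" "qbinom q 2 2 = 1"
    using qbinom_0[of q 2] qbinom_diag[of q 2] nz True by simp_all
  ultimately have "(\<Sum>j\<in>{-int L..int L}. of_int (Legendre j 3) * q ^ nat ((j - 1) * (j - 2) div 2)
            * qbinom q (2 * int L) (int L + j)) = 1 - q ^ 3"
    using True by (simp add: Legendre_mod_3)
  moreover have "(1 + q + q\<^sup>2) * (1 - q) = 1 - q ^ 3"
    by (simp add: algebra_simps power2_eq_square power3_eq_cube)
  ultimately show ?thesis
    using True by simp
next
  case False
  define n where "n = L - 2"
  have L: "L = n + 2"
    using False \<open>0 < L\<close> unfolding n_def by simp
  from Legendre_qbinom_sum_ge_2[OF nz L] show ?thesis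
    unfolding L by simp
qed

theorem theorem2p1:
  fixes q :: complex and L :: nat
  assumes "qpoch q q (2 * L) \<noteq> 0"
    and "L > 0 \<Longrightarrow> qpoch (-1) q (L - 1) \<noteq> 0"
  shows "(\<Sum>j\<in>{-int L..int L}. of_int (Legendre j 3) * q ^ nat ((j - 1) * (j - 2) div 2)
            * qbinom q (2 * int L) (int L + j))
       = (if L > 0 then qpoch (-1) (q ^ 3) (L - 1) / qpoch (-1) q (L - 1) * q ^ (L - 1)
                        * ((1 - q ^ 3) / (1 - q)) * (1 - q ^ L)
          else 0)"
proof (cases "L > 0")
  case True
  have "q \<noteq> 1"
    using qpoch_nonzero_le[OF assms(1), of 1] True by (simp add: qpoch_def)
  then have "(1 - q ^ 3) / (1 - q) = 1 + q + q\<^sup>2"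
    by (simp add: field_simps power2_eq_square power3_eq_cube)
  moreover have "qpoch (-1) (q ^ 3) (L - 1) / qpoch (-1) q (L - 1) = (\<Prod>i<L - 1. 1 - q ^ i + (q ^ i)\<^sup>2)"
    using qpoch_cube[of 1 q "L - 1"] assms(2)[OF True] by simp
  ultimately show ?thesis
    using Legendre_qbinom_sum[OF assms(1) True] True by (simp add: mult_ac)
qed (simp add: Legendre_def)

end
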